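(* Let $X$ be an $n$-dimensional real normed space and let $Y \subseteq X$ be a $k$-dimensional subspace, where $1 \leq k \leq n-1$. Suppose that $x_0 \in X \setminus Y$ and there exists a minimal $I$-set for $Y$ with respect to $x_0$ of cardinality $l$. Then $\dim P_Y(x_0) \leq k-l+1$.
   Context: $P_Y(x)=\{y\in Y:\|x-y\|=\mathrm{dist}(x,Y)\}$ is the (convex) set of best approximations of $x$ in $Y$, and $\dim$ denotes affine dimension. For $x_0\in X\setminus Y$, a set of functionals $\{f_1,\dots,f_l\}\subseteq \mathrm{ext}\,B_{X^*}$ (extreme points of the dual unit ball) is an $I$-set for $Y$ with respect to $x_0$ if there exist $y_0\in P_Y(x_0)$ and positive reals $\alpha_1,\dots,\alpha_l$ with $\sum_i\alpha_i=1$ such that $f_i(x_0-y_0)=\|x_0-y_0\|$ for all $i$ and $\sum_{i=1}^l\alpha_i f_i(y)=0$ for all $y\in Y$. An $I$-set is minimal if no proper subset of it is an $I$-set for $Y$ with respect to $x_0$. *)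

theory Defs
  imports "HOL-Analysis.Analysis"
begin

text \<open>Affine dimension for arbitrary real vector spaces (the library's aff_dim
  is restricted to euclidean_space); same definition as the library's.\<close>
definition gen_aff_dim :: "('a::real_vector) set \<Rightarrow> int"
  where "gen_aff_dim V =
  (SOME d :: int.
    \<exists>B. affine hull B = affine hull V \<and> \<not> affine_dependent B \<and> of_nat (card B) = d + 1)"

definition best_approx :: "'a::real_normed_vector set \<Rightarrow> 'a \<Rightarrow> 'a set"
  where "best_approx Y x = {y \<in> Y. norm (x - y) = infdist x Y}"

definition is_I_set :: "'a::real_normed_vector set \<Rightarrow> 'a \<Rightarrow> ('a \<Rightarrow>\<^sub>L real) set \<Rightarrow> bool"
  where "is_I_set Y x0 F \<longleftrightarrow>
    finite F \<and> F \<noteq> {} \<and> (\<forall>f\<in>F. f extreme_point_of (cball 0 1)) \<and>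
    (\<exists>y0 \<in> best_approx Y x0. \<exists>\<alpha> :: ('a \<Rightarrow>\<^sub>L real) \<Rightarrow> real.
        (\<forall>f\<in>F. \<alpha> f > 0) \<and> (\<Sum>f\<in>F. \<alpha> f) = 1 \<and>
        (\<forall>f\<in>F. blinfun_apply f (x0 - y0) = norm (x0 - y0)) \<and>
        (\<forall>y\<in>Y. (\<Sum>f\<in>F. \<alpha> f * blinfun_apply f y) = 0))"

definition is_minimal_I_set :: "'a::real_normed_vector set \<Rightarrow> 'a \<Rightarrow> ('a \<Rightarrow>\<^sub>L real) set \<Rightarrow> bool"
  where "is_minimal_I_set Y x0 F \<longleftrightarrow>
    is_I_set Y x0 F \<and> (\<forall>G. G \<subset> F \<longrightarrow> \<not> is_I_set Y x0 G)"

end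

theory Submission
  imports Defs
begin

text \<open>Let \<open>y0\<close> and the weights \<open>\<alpha>\<close> witness the \<open>I\<close>-set \<open>F\<close>. For every best approximation \<open>y\<close> the
  numbers \<open>f (y - y0)\<close>, \<open>f \<in> F\<close>, are nonnegative with vanishing \<open>\<alpha>\<close>-weighted sum, hence zero: \<open>P\<^sub>Y(x0)\<close>
  lies in \<open>y0 + T\<close>, where \<open>T\<close> is the common kernel of \<open>F\<close> in \<open>Y\<close>. Minimality of \<open>F\<close> forces the
  restrictions to \<open>Y\<close> of all but one of its \<open>l\<close> functionals to be linearly independent, since a
  dependency among them could be used to shift the weights \<open>\<alpha>\<close> onto a proper subset of \<open>F\<close>. So
  \<open>dim T \<le> k - (l - 1)\<close>.\<close>

lemma finite_dimensional_vector_space_if_dim_UNIV_pos: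
  assumes "dim (UNIV :: 'a::real_vector set) > 0"
  obtains Bs where "finite_dimensional_vector_space (scaleR :: real \<Rightarrow> 'a \<Rightarrow> 'a) Bs"
proof -
  obtain B :: "'a set" where B: "independent B" "UNIV \<subseteq> span B" "card B = dim (UNIV :: 'a set)"
    using basis_exists[of "UNIV :: 'a set"] by blast
  \<comment> \<open>\<open>dim\<close> is \<open>0\<close> on infinite-dimensional spaces, so the basis is finite\<close>
  then have "finite B"
    using assms card.infinite by fastforce
  with B show thesis
    by (intro that[of B]) (unfold_locales, auto simp: dependent_raw_def span_raw_def)
qed

lemma dim_less_if_subspace_psubset:
  fixes S T :: "'a::real_vector set"
  assumes "finite_dimensional_vector_space (scaleR :: real \<Rightarrow> 'a \<Rightarrow> 'a) Bs"
    and "subspace S" "subspace T" "S \<subset> T"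
  shows "dim S < dim T"
proof -
  interpret fd: finite_dimensional_vector_space "scaleR :: real \<Rightarrow> 'a \<Rightarrow> 'a" Bs by fact
  have "span S = S" "span T = T"
    using assms(2,3) by (simp_all add: span_eq_iff)
  then show ?thesis
    using fd.dim_psubset[of S T] assms(4) by (simp add: dim_raw_def span_raw_def)
qed

lemma card_le_dim_if_independent:
  fixes C S :: "'a::real_vector set"
  assumes "finite_dimensional_vector_space (scaleR :: real \<Rightarrow> 'a \<Rightarrow> 'a) Bs"
    and "C \<subseteq> S" "independent C"
  shows "card C \<le> dim S"
proof -
  interpret fd: finite_dimensional_vector_space "scaleR :: real \<Rightarrow> 'a \<Rightarrow> 'a" Bs by fact
  show ?thesis
    using fd.independent_card_le_dim assms(2,3) by (simp add: dim_raw_def dependent_raw_def span_raw_def)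
qed

lemma gen_aff_dim_affine_basis:
  fixes P :: "'a::real_vector set"
  obtains B where "affine hull B = affine hull P" "\<not> affine_dependent B"
    "int (card B) = gen_aff_dim P + 1"
proof -
  define Q where "Q d \<longleftrightarrow>
    (\<exists>B. affine hull B = affine hull P \<and> \<not> affine_dependent B \<and> int (card B) = d + 1)" for d
  obtain B0 where "B0 \<subseteq> P" "\<not> affine_dependent B0" "affine hull P = affine hull B0"
    using affine_basis_exists[of P] by blast
  then have "Q (int (card B0) - 1)"
    unfolding Q_def by auto
  then have "Q (gen_aff_dim P)"
    unfolding gen_aff_dim_def Q_def[symmetric] by (rule someI)
  with that show thesis
    unfolding Q_def by blast
qed

lemma card_affine_independent_le_dim:
  fixes B T :: "'a::real_vector set"
  assumes fd: "finite_dimensional_vector_space (scaleR :: real \<Rightarrow> 'a \<Rightarrow> 'a) Bs"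
    and T: "subspace T" and B: "\<not> affine_dependent B" "B \<subseteq> (+) a ` T"
  shows "card B \<le> dim T + 1"
proof (cases "B = {}")
  case False
  then obtain b where b: "b \<in> B" by blast
  define C where "C = (\<lambda>x. - b + x) ` (B - {b})"
  have "C \<subseteq> T"
  proof
    fix c assume "c \<in> C"
    then obtain x where x: "x \<in> B" "c = - b + x"
      unfolding C_def by auto
    obtain u v where uv: "u \<in> T" "v \<in> T" "x = a + u" "b = a + v"
      using x(1) b B(2) by (meson image_iff subsetD)
    then have "c = u - v"
      using x(2) by (simp add: algebra_simps)
    then show "c \<in> T"
      using subspace_diff[OF T uv(1,2)] by simp
  qed
  moreover have "independent C"
    using affine_dependent_iff_dependent2[OF b] B(1) unfolding C_def by simp
  ultimately have "card C \<le> dim T"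
    by (rule card_le_dim_if_independent[OF fd])
  moreover have "card C = card (B - {b})"
    unfolding C_def by (rule card_image) (simp add: inj_on_def)
  ultimately show ?thesis
    using b by (simp add: card_Diff_singleton_if)
qed simp

lemma gen_aff_dim_le_dim_if_subset_translation:
  fixes P T :: "'a::real_vector set"
  assumes fd: "finite_dimensional_vector_space (scaleR :: real \<Rightarrow> 'a \<Rightarrow> 'a) Bs"
    and T: "subspace T" and P: "P \<subseteq> (+) a ` T"
  shows "gen_aff_dim P \<le> int (dim T)"
proof -
  obtain B where B: "affine hull B = affine hull P" "\<not> affine_dependent B"
    "int (card B) = gen_aff_dim P + 1"
    by (rule gen_aff_dim_affine_basis)
  have "affine ((+) a ` T)"
    using T affine_translation subspace_imp_affine by blast
  then have "affine hull P \<subseteq> (+) a ` T"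
    using P by (rule hull_minimal[rotated])
  then have "B \<subseteq> (+) a ` T"
    using B(1) hull_subset[of B affine] by blast
  then have "card B \<le> dim T + 1"
    by (rule card_affine_independent_le_dim[OF fd T B(2)])
  with B(3) show ?thesis by linarith
qed

definition common_kernel :: "'a set \<Rightarrow> ('i \<Rightarrow> 'a \<Rightarrow> real) \<Rightarrow> 'i set \<Rightarrow> 'a set"
  where "common_kernel Y \<phi> G = {y \<in> Y. \<forall>i\<in>G. \<phi> i y = 0}"

lemma common_kernel_empty [simp]: "common_kernel Y \<phi> {} = Y"
  by (simp add: common_kernel_def)

lemma common_kernel_insert:
  "common_kernel Y \<phi> (insert i G) = {y \<in> common_kernel Y \<phi> G. \<phi> i y = 0}"
  by (auto simp: common_kernel_def)

lemma common_kernel_antimono: "G \<subseteq> H \<Longrightarrow> common_kernel Y \<phi> H \<subseteq> common_kernel Y \<phi> G"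
  by (auto simp: common_kernel_def)

lemma subspace_common_kernel:
  fixes \<phi> :: "'i \<Rightarrow> 'a::real_vector \<Rightarrow> real"
  assumes "subspace Y" "\<forall>i\<in>G. linear (\<phi> i)"
  shows "subspace (common_kernel Y \<phi> G)"
  using assms unfolding subspace_def common_kernel_def by (auto simp: linear_0 linear_add linear_scale)

lemma linear_combination_if_vanishes_on_common_kernel:
  fixes \<phi> :: "'i \<Rightarrow> 'a::real_vector \<Rightarrow> real"
  assumes "subspace Y" "finite G" "\<forall>i\<in>G. linear (\<phi> i)" "linear g"
    and "\<forall>y\<in>common_kernel Y \<phi> G. g y = 0"
  shows "\<exists>c. \<forall>y\<in>Y. g y = (\<Sum>i\<in>G. c i * \<phi> i y)"
  using assms(2-5)
proof (induction G arbitrary: g rule: finite_induct)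
  case empty
  then show ?case by simp
next
  case (insert h G)
  have "\<exists>a. \<forall>y\<in>common_kernel Y \<phi> G. g y - a * \<phi> h y = 0"
  proof (cases "\<forall>y\<in>common_kernel Y \<phi> G. \<phi> h y = 0")
    case True
    then show ?thesis
      using insert.prems(3) by (auto simp: common_kernel_insert)
  next
    case False
    then obtain z where z: "z \<in> common_kernel Y \<phi> G" "\<phi> h z \<noteq> 0" by blast
    define w where "w = (1 / \<phi> h z) *\<^sub>R z"
    have ker: "subspace (common_kernel Y \<phi> G)"
      using subspace_common_kernel assms(1) insert.prems(1) by blast
    have w: "w \<in> common_kernel Y \<phi> G" "\<phi> h w = 1"
      using z subspace_scale[OF ker] insert.prems(1) by (simp_all add: w_def linear_scale)
    show ?thesis
    proof (intro exI ballI)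
      fix y assume y: "y \<in> common_kernel Y \<phi> G"
      have "y - \<phi> h y *\<^sub>R w \<in> common_kernel Y \<phi> (insert h G)"
        using y w subspace_diff[OF ker] subspace_scale[OF ker] insert.prems(1)
        by (simp add: common_kernel_insert linear_diff linear_scale)
      then have "g (y - \<phi> h y *\<^sub>R w) = 0"
        using insert.prems(3) by blast
      then show "g y - g w * \<phi> h y = 0"
        using insert.prems(2) by (simp add: linear_diff linear_scale)
    qed
  qed
  then obtain a where a: "\<forall>y\<in>common_kernel Y \<phi> G. g y - a * \<phi> h y = 0" ..
  have "linear (\<lambda>y. g y - a *\<^sub>R \<phi> h y)"
    using insert.prems(1,2) by (intro linear_compose_sub linear_compose_scale_right) auto
  then have "linear (\<lambda>y. g y - a * \<phi> h y)" by simp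
  then obtain c where c: "\<forall>y\<in>Y. g y - a * \<phi> h y = (\<Sum>i\<in>G. c i * \<phi> i y)"
    using insert.IH insert.prems(1) a by blast
  have "\<forall>y\<in>Y. g y = (\<Sum>i\<in>insert h G. (c(h := a)) i * \<phi> i y)"
  proof
    fix y assume "y \<in> Y"
    have "(\<Sum>i\<in>G. (c(h := a)) i * \<phi> i y) = (\<Sum>i\<in>G. c i * \<phi> i y)"
      using insert.hyps(2) by (intro sum.cong) auto
    then show "g y = (\<Sum>i\<in>insert h G. (c(h := a)) i * \<phi> i y)"
      using c \<open>y \<in> Y\<close> insert.hyps by (simp add: diff_eq_eq)
  qed
  then show ?case by blast
qed

lemma exists_shift_to_boundary_pos:
  fixes \<alpha> \<beta> :: "'i \<Rightarrow> real"
  assumes "finite F" "\<forall>i\<in>F. \<alpha> i > 0" "g \<in> F" "\<beta> g > 0"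
  shows "\<exists>t. (\<forall>i\<in>F. t * \<beta> i \<le> \<alpha> i) \<and> (\<exists>f\<in>F. t * \<beta> f = \<alpha> f)"
proof -
  define P where "P = {i \<in> F. \<beta> i > 0}"
  have "finite P" "g \<in> P"
    using assms(1,3,4) by (simp_all add: P_def)
  then obtain f where "is_arg_min (\<lambda>i. \<alpha> i / \<beta> i) (\<lambda>i. i \<in> P) f"
    using ex_is_arg_min_if_finite[of P] by blast
  then have f: "f \<in> F" "\<beta> f > 0" "\<And>i. i \<in> F \<Longrightarrow> \<beta> i > 0 \<Longrightarrow> \<alpha> f / \<beta> f \<le> \<alpha> i / \<beta> i"
    unfolding is_arg_min_linorder P_def by auto
  have "\<alpha> f / \<beta> f * \<beta> i \<le> \<alpha> i" if "i \<in> F" for i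
  proof (cases "\<beta> i > 0")
    case True
    then show ?thesis
      using f(3)[OF that] by (simp add: pos_le_divide_eq)
  next
    case False
    then have "\<alpha> f / \<beta> f * \<beta> i \<le> 0"
      using f(1,2) assms(2) by (intro mult_nonneg_nonpos) auto
    then show ?thesis
      using assms(2) that by fastforce
  qed
  moreover have "\<alpha> f / \<beta> f * \<beta> f = \<alpha> f"
    using f(2) by simp
  ultimately show ?thesis
    using f(1) by blast
qed

lemma exists_shift_to_boundary:
  fixes \<alpha> \<beta> :: "'i \<Rightarrow> real"
  assumes "finite F" "\<forall>i\<in>F. \<alpha> i > 0" "g \<in> F" "\<beta> g \<noteq> 0"
  obtains t f where "\<forall>i\<in>F. t * \<beta> i \<le> \<alpha> i" "f \<in> F" "t * \<beta> f = \<alpha> f"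
proof -
  have "\<exists>t. (\<forall>i\<in>F. t * \<beta> i \<le> \<alpha> i) \<and> (\<exists>f\<in>F. t * \<beta> f = \<alpha> f)"
  proof (cases "\<beta> g > 0")
    case True
    then show ?thesis
      using exists_shift_to_boundary_pos[OF assms(1-3)] by blast
  next
    case False
    then obtain t where "\<forall>i\<in>F. t * - \<beta> i \<le> \<alpha> i" "\<exists>f\<in>F. t * - \<beta> f = \<alpha> f"
      using exists_shift_to_boundary_pos[OF assms(1-3), of "\<lambda>i. - \<beta> i"] assms(4) by force
    then show ?thesis
      by (intro exI[of _ "- t"]) simp
  qed
  with that show thesis by blast
qed

text \<open>Decreasing the weights \<open>\<alpha>\<close> along \<open>\<beta>\<close> until the first one vanishes keeps the relation and
  the positivity at \<open>f0\<close> (where \<open>\<beta>\<close> is zero), and discards at least one functional.\<close>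
lemma positive_relation_on_proper_subset:
  fixes \<phi> :: "'i \<Rightarrow> 'a \<Rightarrow> real"
  assumes F: "finite F" "f0 \<in> F" and \<alpha>: "\<forall>f\<in>F. \<alpha> f > 0" "\<forall>y\<in>Y. (\<Sum>f\<in>F. \<alpha> f * \<phi> f y) = 0"
    and \<beta>: "\<forall>y\<in>Y. (\<Sum>f\<in>F. \<beta> f * \<phi> f y) = 0" "\<beta> f0 = 0" "g \<in> F" "\<beta> g \<noteq> 0"
  obtains G \<gamma> where "G \<subset> F" "f0 \<in> G" "\<forall>f\<in>G. \<gamma> f > 0" "sum \<gamma> G = 1"
    "\<forall>y\<in>Y. (\<Sum>f\<in>G. \<gamma> f * \<phi> f y) = 0"
proof -
  obtain t f1 where t: "\<forall>f\<in>F. t * \<beta> f \<le> \<alpha> f" "f1 \<in> F" "t * \<beta> f1 = \<alpha> f1"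
    by (rule exists_shift_to_boundary[of F \<alpha> g \<beta>, OF F(1) \<alpha>(1) \<beta>(3,4)])
  define \<delta> where "\<delta> f = \<alpha> f - t * \<beta> f" for f
  define G where "G = {f \<in> F. \<delta> f > 0}"
  have "f1 \<notin> G" "G \<subseteq> F"
    using t(3) unfolding G_def \<delta>_def by auto
  with t(2) have "G \<subset> F" by blast
  moreover have "f0 \<in> G"
    using F(2) \<alpha>(1) \<beta>(2) unfolding G_def \<delta>_def by simp
  moreover have \<delta>G: "\<forall>y\<in>Y. (\<Sum>f\<in>G. \<delta> f * \<phi> f y) = 0"
  proof
    fix y assume "y \<in> Y"
    have "(\<Sum>f\<in>G. \<delta> f * \<phi> f y) = (\<Sum>f\<in>F. \<delta> f * \<phi> f y)"
      using F(1) t(1) by (intro sum.mono_neutral_left) (auto simp: G_def \<delta>_def)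
    also have "\<dots> = (\<Sum>f\<in>F. \<alpha> f * \<phi> f y) - t * (\<Sum>f\<in>F. \<beta> f * \<phi> f y)"
      unfolding \<delta>_def by (simp add: algebra_simps sum_subtractf sum_distrib_left)
    finally show "(\<Sum>f\<in>G. \<delta> f * \<phi> f y) = 0"
      using \<alpha>(2) \<beta>(1) \<open>y \<in> Y\<close> by simp
  qed
  moreover have "sum \<delta> G > 0"
    using \<open>f0 \<in> G\<close> F(1) \<open>G \<subset> F\<close> by (intro sum_pos) (auto simp: G_def dest: finite_subset)
  ultimately show thesis
    by (intro that[of G "\<lambda>f. \<delta> f / sum \<delta> G"]) (simp_all add: G_def sum_divide_distrib[symmetric])
qed

lemma dim_common_kernel_add_card_le:
  fixes \<phi> :: "'i \<Rightarrow> 'a::real_vector \<Rightarrow> real"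
  assumes fd: "finite_dimensional_vector_space (scaleR :: real \<Rightarrow> 'a \<Rightarrow> 'a) Bs"
    and Y: "subspace Y" and H: "finite H" "\<forall>i\<in>H. linear (\<phi> i)"
    and nonvanishing: "\<And>G i. G \<subseteq> H \<Longrightarrow> i \<in> H - G \<Longrightarrow> \<exists>y\<in>common_kernel Y \<phi> G. \<phi> i y \<noteq> 0"
  shows "dim (common_kernel Y \<phi> H) + card H \<le> dim Y"
proof -
  have "dim (common_kernel Y \<phi> G) + card G \<le> dim Y" if "G \<subseteq> H" for G
    using finite_subset[OF that H(1)] that
  proof (induction G rule: finite_subset_induct')
    case empty
    show ?case by simp
  next
    case (insert i G)
    have ker: "subspace (common_kernel Y \<phi> G')" if "G' \<subseteq> H" for G'
      using H(2) that by (intro subspace_common_kernel[OF Y]) auto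
    obtain y where "y \<in> common_kernel Y \<phi> G" "\<phi> i y \<noteq> 0"
      using nonvanishing[of G i] insert.hyps by blast
    then have "common_kernel Y \<phi> (insert i G) \<subset> common_kernel Y \<phi> G"
      by (auto simp: common_kernel_insert)
    then have "dim (common_kernel Y \<phi> (insert i G)) < dim (common_kernel Y \<phi> G)"
      using dim_less_if_subspace_psubset[OF fd ker[of "insert i G"] ker[of G]] insert.hyps by simp
    with insert.IH insert.hyps show ?case by simp
  qed
  then show ?thesis by blast
qed

lemma is_I_set_subset:
  assumes "is_I_set Y x0 F" "G \<subseteq> F" "G \<noteq> {}"
    and "\<forall>f\<in>G. \<gamma> f > 0" "sum \<gamma> G = 1" "\<forall>y\<in>Y. (\<Sum>f\<in>G. \<gamma> f * blinfun_apply f y) = 0"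
  shows "is_I_set Y x0 G"
proof -
  have "finite G"
    using assms(1,2) finite_subset by (auto simp: is_I_set_def)
  with assms show ?thesis
    unfolding is_I_set_def by (blast intro!: exI[of _ \<gamma>])
qed

text \<open>If \<open>g\<close> vanished on the common kernel of \<open>G\<close>, it would be a combination of \<open>G\<close> on \<open>Y\<close>: a
  second relation among the functionals of \<open>F\<close> not involving \<open>f0\<close>, which cuts \<open>F\<close> down to a
  smaller \<open>I\<close>-set.\<close>
lemma minimal_I_set_nonvanishing_on_common_kernel:
  assumes Y: "subspace Y" and F: "is_minimal_I_set Y x0 F" "f0 \<in> F"
    and G: "G \<subseteq> F - {f0}" "g \<in> F - {f0} - G"
  shows "\<exists>y\<in>common_kernel Y blinfun_apply G. blinfun_apply g y \<noteq> 0"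
proof (rule ccontr)
  assume vanishing: "\<not> ?thesis"
  have I: "is_I_set Y x0 F"
    using F(1) by (simp add: is_minimal_I_set_def)
  then obtain \<alpha> where \<alpha>: "\<forall>f\<in>F. \<alpha> f > 0"
    and annihilating: "\<forall>y\<in>Y. (\<Sum>f\<in>F. \<alpha> f * blinfun_apply f y) = 0"
    unfolding is_I_set_def by blast
  have finite: "finite F" "finite G"
    using I G(1) finite_subset by (auto simp: is_I_set_def)
  have linear: "\<forall>f\<in>G. linear (blinfun_apply f)" "linear (blinfun_apply g)"
    by (simp_all add: bounded_linear.linear[OF blinfun.bounded_linear_right])
  obtain c where c: "\<forall>y\<in>Y. blinfun_apply g y = (\<Sum>f\<in>G. c f * blinfun_apply f y)"
    using linear_combination_if_vanishes_on_common_kernel[OF Y finite(2) linear] vanishing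
    by blast
  define \<beta> where "\<beta> f = (if f = g then 1 else if f \<in> G then - c f else 0)" for f
  have "\<forall>y\<in>Y. (\<Sum>f\<in>F. \<beta> f * blinfun_apply f y) = 0"
  proof
    fix y assume "y \<in> Y"
    have \<beta>G: "(\<Sum>f\<in>G. \<beta> f * blinfun_apply f y) = - (\<Sum>f\<in>G. c f * blinfun_apply f y)"
      unfolding sum_negf[symmetric] using G(2) by (intro sum.cong) (auto simp: \<beta>_def)
    have "(\<Sum>f\<in>F. \<beta> f * blinfun_apply f y) = (\<Sum>f\<in>insert g G. \<beta> f * blinfun_apply f y)"
      using finite(1) G by (intro sum.mono_neutral_right) (auto simp: \<beta>_def)
    also have "\<dots> = blinfun_apply g y - (\<Sum>f\<in>G. c f * blinfun_apply f y)"
      using G(2) finite(2) \<beta>G by (simp add: \<beta>_def)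
    finally show "(\<Sum>f\<in>F. \<beta> f * blinfun_apply f y) = 0"
      using c \<open>y \<in> Y\<close> by simp
  qed
  moreover have "\<beta> f0 = 0" "\<beta> g \<noteq> 0"
    using G by (auto simp: \<beta>_def)
  ultimately obtain G' \<gamma> where G': "G' \<subset> F" "f0 \<in> G'" "\<forall>f\<in>G'. \<gamma> f > 0" "sum \<gamma> G' = 1"
      "\<forall>y\<in>Y. (\<Sum>f\<in>G'. \<gamma> f * blinfun_apply f y) = 0"
    using positive_relation_on_proper_subset[of F f0 \<alpha> Y blinfun_apply \<beta> g]
      finite(1) F(2) \<alpha> annihilating G(2) by blast
  then have "is_I_set Y x0 G'"
    by (intro is_I_set_subset[OF I]) auto
  then show False
    using F(1) G'(1) by (simp add: is_minimal_I_set_def)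
qed

text \<open>Each \<open>f \<in> F\<close> has norm at most one and norms \<open>x0 - y0\<close>, so \<open>f (y - y0) \<ge> 0\<close> for every best
  approximation \<open>y\<close>; as the \<open>\<alpha>\<close>-weighted sum of these numbers is zero, all of them vanish.\<close>
lemma best_approx_subset_translation_common_kernel:
  assumes Y: "subspace Y" and F: "is_I_set Y x0 F"
  obtains y0 where "best_approx Y x0 \<subseteq> (+) y0 ` common_kernel Y blinfun_apply F"
proof -
  obtain y0 \<alpha> where y0: "y0 \<in> best_approx Y x0" and \<alpha>: "\<forall>f\<in>F. \<alpha> f > 0"
    and norming: "\<forall>f\<in>F. blinfun_apply f (x0 - y0) = norm (x0 - y0)"
    and annihilating: "\<forall>y\<in>Y. (\<Sum>f\<in>F. \<alpha> f * blinfun_apply f y) = 0"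
    using F unfolding is_I_set_def by blast
  have "y - y0 \<in> common_kernel Y blinfun_apply F" if y: "y \<in> best_approx Y x0" for y
  proof -
    have "y - y0 \<in> Y"
      using y y0 Y subspace_diff by (auto simp: best_approx_def)
    have nonneg: "blinfun_apply f (y - y0) \<ge> 0" if "f \<in> F" for f
    proof -
      have "norm f \<le> 1"
        using F that by (auto simp: is_I_set_def extreme_point_of_def)
      have "blinfun_apply f (x0 - y) \<le> norm f * norm (x0 - y)"
        using norm_blinfun[of f "x0 - y"] by (metis abs_ge_self order_trans real_norm_def)
      also have "\<dots> \<le> norm (x0 - y)"
        using \<open>norm f \<le> 1\<close> by (simp add: mult_left_le_one_le)
      finally have "blinfun_apply f (x0 - y) \<le> norm (x0 - y)" .
      moreover have "norm (x0 - y) = norm (x0 - y0)"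
        using y y0 by (simp add: best_approx_def)
      ultimately show ?thesis
        using norming[rule_format, OF that] by (simp add: blinfun.diff_right)
    qed
    have "(\<Sum>f\<in>F. \<alpha> f * blinfun_apply f (y - y0)) = 0"
      using annihilating \<open>y - y0 \<in> Y\<close> by blast
    then have "\<forall>f\<in>F. \<alpha> f * blinfun_apply f (y - y0) = 0"
      using F \<alpha> nonneg by (subst (asm) sum_nonneg_eq_0_iff) (auto simp: is_I_set_def)
    with \<alpha> \<open>y - y0 \<in> Y\<close> show ?thesis
      by (fastforce simp: common_kernel_def)
  qed
  then show thesis
    by (intro that[of y0]) (force simp: image_iff)
qed

theorem mainTheorem12:
  fixes Y :: "'a::real_normed_vector set" and x0 :: 'a
    and n k l :: nat and F :: "('a \<Rightarrow>\<^sub>L real) set"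
  assumes "dim (UNIV :: 'a set) = n"
    and "subspace Y" and "dim Y = k"
    and "1 \<le> k" and "k \<le> n - 1"
    and "x0 \<notin> Y"
    and "is_minimal_I_set Y x0 F" and "card F = l"
  shows "gen_aff_dim (best_approx Y x0) \<le> int k - int l + 1"
proof -
  have "dim (UNIV :: 'a set) > 0"
    using assms(1,4,5) by linarith
  then obtain Bs where fd: "finite_dimensional_vector_space (scaleR :: real \<Rightarrow> 'a \<Rightarrow> 'a) Bs"
    by (rule finite_dimensional_vector_space_if_dim_UNIV_pos)
  have I: "is_I_set Y x0 F"
    using assms(7) by (simp add: is_minimal_I_set_def)
  then obtain f0 where f0: "f0 \<in> F" and "finite F"
    by (auto simp: is_I_set_def)
  obtain y0 where y0: "best_approx Y x0 \<subseteq> (+) y0 ` common_kernel Y blinfun_apply F"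
    using best_approx_subset_translation_common_kernel[OF assms(2) I] .
  define T where "T = common_kernel Y blinfun_apply (F - {f0})"
  have linear: "\<forall>f\<in>F - {f0}. linear (blinfun_apply f)"
    by (simp add: bounded_linear.linear[OF blinfun.bounded_linear_right])
  have "best_approx Y x0 \<subseteq> (+) y0 ` T"
    using y0 common_kernel_antimono[of "F - {f0}" F Y blinfun_apply] unfolding T_def by blast
  then have "gen_aff_dim (best_approx Y x0) \<le> int (dim T)"
    unfolding T_def
    by (rule gen_aff_dim_le_dim_if_subset_translation[OF fd subspace_common_kernel[OF assms(2) linear]])
  moreover have "dim T + card (F - {f0}) \<le> k"
    unfolding T_def assms(3)[symmetric]
    by (rule dim_common_kernel_add_card_le[OF fd assms(2) _ linear
          minimal_I_set_nonvanishing_on_common_kernel[OF assms(2,7) f0]]) (use \<open>finite F\<close> in simp)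
  ultimately show ?thesis
    using assms(8) f0 \<open>finite F\<close> by (simp add: card_Diff_singleton)
qed

end
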